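(* Let $\bm X=X_1\times\cdots\times X_n\in\mathbb{IR}^n$ with $\operatorname{wid}(X_i)>0$ for at least one $i$. Let $Z\subseteq\mathbb{R}$ be convex with $\sum_{i=1}^n x_i\in Z$ for all $\bm x\in\bm X$, and let $\varphi:Z\to\mathbb{R}$ be convex. Define $\mathcal P=\{j\in\{1,\dots,n\}:\operatorname{wid}(X_j)>0\}$, $\theta_i=\operatorname{wid}(X_i)/\sum_{j\in\mathcal P}\operatorname{wid}(X_j)$ for $i\in\mathcal P$, $\underline\sigma=\sum_{i=1}^n\underline X_i$ and $\overline\sigma=\sum_{i=1}^n\overline X_i$. Then for all $\bm x\in\bm X$, $$\varphi\Big(\sum_{i=1}^n x_i\Big)\le\sum_{i\in\mathcal P}\theta_i\,\varphi\Big(\frac{x_i-\underline X_i}{\theta_i}+\underline\sigma\Big)=\sum_{i\in\mathcal P}\theta_i\,\varphi\Big(\frac{x_i-\overline X_i}{\theta_i}+\overline\sigma\Big).$$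
   Context: $\mathbb{IR}^n$ is the set of boxes $\bm X=X_1\times\cdots\times X_n$ with $X_i=[\underline X_i,\overline X_i]$ compact real intervals; $\operatorname{wid}(X_i)=\overline X_i-\underline X_i$. *)

theory Defs
  imports "HOL-Analysis.Analysis"
begin

text \<open>An interval box X = X_1 x ... x X_n is given by lower and upper endpoint
functions lo, hi :: nat => real on the index set {1..n}, with lo i <= hi i.\<close>

definition wid :: "(nat \<Rightarrow> real) \<Rightarrow> (nat \<Rightarrow> real) \<Rightarrow> nat \<Rightarrow> real" where
  "wid lo hi i = hi i - lo i"

definition in_box :: "nat \<Rightarrow> (nat \<Rightarrow> real) \<Rightarrow> (nat \<Rightarrow> real) \<Rightarrow> (nat \<Rightarrow> real) \<Rightarrow> bool" where
  "in_box n lo hi x \<longleftrightarrow> (\<forall>i\<in>{1..n}. lo i \<le> x i \<and> x i \<le> hi i)"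

end

theory Submission
  imports Defs
begin

text \<open>Put \<open>W = \<Sum>\<^sub>j wid X\<^sub>j\<close>. Since \<open>\<theta>\<^sub>i W = wid X\<^sub>i\<close>, the point
  \<open>(x\<^sub>i - lo\<^sub>i)/\<theta>\<^sub>i + \<sigma>lo\<close> lies in \<open>[\<sigma>lo, \<sigma>lo + W] = [\<sigma>lo, \<sigma>hi] \<subseteq> Z\<close>, and the
  \<open>\<theta>\<^sub>i\<close>-weighted mean of these points is \<open>\<sigma>lo + \<Sum>\<^sub>i (x\<^sub>i - lo\<^sub>i) = \<Sum>\<^sub>i x\<^sub>i\<close>, so the
  inequality is Jensen's. Replacing \<open>lo\<close> by \<open>hi\<close> shifts each point by
  \<open>-wid X\<^sub>i/\<theta>\<^sub>i + W = 0\<close>, which gives the equality.\<close>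

lemma convex_on_shifted_sum_le:
  fixes \<theta> d :: "'a \<Rightarrow> real"
  assumes "finite P" "P \<noteq> {}" "convex_on Z \<phi>"
    and "\<And>i. i \<in> P \<Longrightarrow> \<theta> i > 0" "sum \<theta> P = 1"
    and "\<And>i. i \<in> P \<Longrightarrow> d i / \<theta> i + s \<in> Z"
  shows "\<phi> (s + sum d P) \<le> (\<Sum>i\<in>P. \<theta> i * \<phi> (d i / \<theta> i + s))"
proof -
  have "(\<Sum>i\<in>P. \<theta> i *\<^sub>R (d i / \<theta> i + s)) = (\<Sum>i\<in>P. d i + \<theta> i * s)"
    by (intro sum.cong) (auto simp: field_simps dest: assms(4))
  also have "\<dots> = s + sum d P"
    using assms(5) by (simp add: sum.distrib flip: sum_distrib_right)
  finally have "\<phi> (s + sum d P) = \<phi> (\<Sum>i\<in>P. \<theta> i *\<^sub>R (d i / \<theta> i + s))" by simp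
  also have "\<dots> \<le> (\<Sum>i\<in>P. \<theta> i * \<phi> (d i / \<theta> i + s))"
    using assms by (intro convex_on_sum) (auto intro: less_imp_le)
  finally show ?thesis .
qed

lemma convex_real_scaled_offset_mem:
  fixes Z :: "real set"
  assumes "convex Z" "a \<in> Z" "a + W \<in> Z"
    and "\<theta> > 0" "0 \<le> d" "d \<le> \<theta> * W"
  shows "d / \<theta> + a \<in> Z"
proof (rule mem_is_interval_1_I)
  show "is_interval Z" using \<open>convex Z\<close> by (simp add: is_interval_convex_1)
  show "a \<le> d / \<theta> + a" using assms(4,5) by simp
  show "d / \<theta> + a \<le> a + W" using assms(4,6) by (simp add: divide_le_eq mult.commute)
qed (use assms in auto)

lemma shift_offset_by_width:
  fixes \<theta> :: real
  assumes "\<theta> \<noteq> 0" "\<theta> * (b - a) = hi - lo"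
  shows "(x - lo) / \<theta> + a = (x - hi) / \<theta> + b"
  using assms by (simp add: field_simps)

lemma in_box_lo: "\<forall>i\<in>{1..n}. lo i \<le> hi i \<Longrightarrow> in_box n lo hi lo"
  and in_box_hi: "\<forall>i\<in>{1..n}. lo i \<le> hi i \<Longrightarrow> in_box n lo hi hi"
  by (auto simp: in_box_def)

text \<open>Coordinates of zero width are pinned to their lower endpoint.\<close>

lemma in_box_sum_offsets_positive_width:
  assumes "in_box n lo hi x"
  shows "(\<Sum>i=1..n. x i - lo i) = (\<Sum>i\<in>{j\<in>{1..n}. wid lo hi j > 0}. x i - lo i)"
proof (rule sum.mono_neutral_right)
  show "\<forall>i\<in>{1..n} - {j\<in>{1..n}. wid lo hi j > 0}. x i - lo i = 0"
    using assms by (force simp: in_box_def wid_def)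
qed auto

theorem proposition2:
  fixes n :: nat and lo hi :: "nat \<Rightarrow> real" and Z :: "real set" and \<phi> :: "real \<Rightarrow> real"
  assumes box: "\<forall>i\<in>{1..n}. lo i \<le> hi i"
    and pos: "\<exists>i\<in>{1..n}. wid lo hi i > 0"
    and Zconv: "convex Z"
    and sumZ: "\<forall>x. in_box n lo hi x \<longrightarrow> (\<Sum>i=1..n. x i) \<in> Z"
    and phi: "convex_on Z \<phi>"
  defines "P \<equiv> {j\<in>{1..n}. wid lo hi j > 0}"
    and "\<theta> \<equiv> (\<lambda>i. wid lo hi i / (\<Sum>j\<in>{j\<in>{1..n}. wid lo hi j > 0}. wid lo hi j))"
    and "\<sigma>lo \<equiv> (\<Sum>i=1..n. lo i)"
    and "\<sigma>hi \<equiv> (\<Sum>i=1..n. hi i)"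
  shows "\<forall>x. in_box n lo hi x \<longrightarrow>
           \<phi> (\<Sum>i=1..n. x i) \<le> (\<Sum>i\<in>P. \<theta> i * \<phi> ((x i - lo i) / \<theta> i + \<sigma>lo))
         \<and> (\<Sum>i\<in>P. \<theta> i * \<phi> ((x i - lo i) / \<theta> i + \<sigma>lo))
           = (\<Sum>i\<in>P. \<theta> i * \<phi> ((x i - hi i) / \<theta> i + \<sigma>hi))"
proof (intro allI impI conjI)
  fix x assume x: "in_box n lo hi x"
  define W where "W = (\<Sum>j\<in>P. wid lo hi j)"
  have P_wid: "\<And>i. i \<in> P \<Longrightarrow> wid lo hi i > 0" and "finite P" "P \<noteq> {}"
    using pos by (auto simp: P_def)
  then have "W > 0" by (simp add: W_def sum_pos)
  have \<theta>: "\<theta> i = wid lo hi i / W" for i by (simp add: \<theta>_def W_def P_def)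
  have \<theta>_pos: "\<And>i. i \<in> P \<Longrightarrow> \<theta> i > 0" using P_wid \<open>W > 0\<close> by (simp add: \<theta>)
  have \<theta>_W: "\<theta> i * W = hi i - lo i" for i using \<open>W > 0\<close> by (simp add: \<theta> wid_def)
  have "sum \<theta> P = 1" using \<open>W > 0\<close> by (simp add: \<theta> W_def flip: sum_divide_distrib)
  have \<sigma>hi: "\<sigma>hi = \<sigma>lo + W"
    using in_box_sum_offsets_positive_width[OF in_box_hi[OF box]]
    by (simp add: \<sigma>hi_def \<sigma>lo_def W_def P_def wid_def sum_subtractf)
  have sum_x: "(\<Sum>i=1..n. x i) = \<sigma>lo + (\<Sum>i\<in>P. x i - lo i)"
    using in_box_sum_offsets_positive_width[OF x] by (simp add: \<sigma>lo_def P_def sum_subtractf)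
  have "\<sigma>lo \<in> Z" "\<sigma>lo + W \<in> Z"
    using sumZ in_box_lo[OF box] in_box_hi[OF box] \<sigma>hi by (auto simp: \<sigma>lo_def \<sigma>hi_def)
  then have "(x i - lo i) / \<theta> i + \<sigma>lo \<in> Z" if "i \<in> P" for i
    using convex_real_scaled_offset_mem[OF Zconv] \<theta>_pos[OF that] x that
    by (auto simp: in_box_def P_def \<theta>_W)
  with \<open>finite P\<close> \<open>P \<noteq> {}\<close> phi \<theta>_pos \<open>sum \<theta> P = 1\<close>
  show "\<phi> (\<Sum>i=1..n. x i) \<le> (\<Sum>i\<in>P. \<theta> i * \<phi> ((x i - lo i) / \<theta> i + \<sigma>lo))"
    unfolding sum_x by (rule convex_on_shifted_sum_le)
  show "(\<Sum>i\<in>P. \<theta> i * \<phi> ((x i - lo i) / \<theta> i + \<sigma>lo))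
      = (\<Sum>i\<in>P. \<theta> i * \<phi> ((x i - hi i) / \<theta> i + \<sigma>hi))"
  proof (intro sum.cong refl)
    fix i assume "i \<in> P"
    then have "(x i - lo i) / \<theta> i + \<sigma>lo = (x i - hi i) / \<theta> i + \<sigma>hi"
      using \<theta>_pos \<theta>_W \<sigma>hi by (intro shift_offset_by_width) force+
    then show "\<theta> i * \<phi> ((x i - lo i) / \<theta> i + \<sigma>lo) = \<theta> i * \<phi> ((x i - hi i) / \<theta> i + \<sigma>hi)"
      by simp
  qed
qed

end
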